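(* Let $n>1$, $\epsilon\in(0,1)$, and integers $k<d$ with $d=\Omega(\log n)$. Assume the noise standard deviation satisfies $\sigma\le c\,\epsilon/\sqrt[4]{d\log n}$, where $c>0$ is a sufficiently small absolute constant. Consider the Gaussian-noise model described in the context. Then, with high probability, the nearest neighbor of $\tilde q$ in $\tilde P$ is $\tilde p^*$.
   Context: Gaussian-noise model. Let $U\subset\mathbb{R}^d$ be a linear subspace of dimension $k$. Let $P=\{p_1,\dots,p_n\}\subset U$ with $\|p_i\|\ge1$, and let $q\in U$. Suppose there exists $p^*\in P$ with $\|q-p^*\|\le 1$ and $\|q-p\|\ge 1+\epsilon$ for all $p\in P\setminus\{p^*\}$. Set $\tilde P=\{\tilde p_i=p_i+t_i\}$ and $\tilde q=q+t_q$, where $t_1,\dots,t_n,t_q$ are independent random vectors in $\mathbb{R}^d$ whose coordinates are independent $N(0,\sigma^2)$. Let $\tilde p^*$ be the perturbed version of $p^*$. "With high probability" means with probability at least $1-n^{-C}$ for a sufficiently large constant $C>0$. Norms are Euclidean. *)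

theory Defs
  imports "HOL-Probability.Probability"
begin

text \<open>Vectors of R^d are represented as functions nat => real; only the
coordinates 0..d-1 are relevant.\<close>

definition enorm :: "nat \<Rightarrow> (nat \<Rightarrow> real) \<Rightarrow> real" where
  "enorm d x = sqrt (\<Sum>j<d. (x j)\<^sup>2)"

definition edist :: "nat \<Rightarrow> (nat \<Rightarrow> real) \<Rightarrow> (nat \<Rightarrow> real) \<Rightarrow> real" where
  "edist d x y = sqrt (\<Sum>j<d. (x j - y j)\<^sup>2)"

definition lin_subspace_dim :: "nat \<Rightarrow> nat \<Rightarrow> (nat \<Rightarrow> real) set \<Rightarrow> bool" where
  "lin_subspace_dim d k U \<longleftrightarrow>
     (\<exists>b :: nat \<Rightarrow> nat \<Rightarrow> real.
        (\<forall>l<k. \<forall>j\<ge>d. b l j = 0) \<and>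
        (\<forall>a :: nat \<Rightarrow> real. (\<forall>j. (\<Sum>l<k. a l * b l j) = 0) \<longrightarrow> (\<forall>l<k. a l = 0)) \<and>
        U = {x. \<exists>a :: nat \<Rightarrow> real. x = (\<lambda>j. \<Sum>l<k. a l * b l j)})"

definition gauss :: "real \<Rightarrow> real measure" where
  "gauss \<sigma> = (if \<sigma> = 0 then return borel 0 else density lborel (normal_density 0 \<sigma>))"

text \<open>Noise space: coordinates (i,j), i \<le> n (i < n: data points, i = n: query), j < d.\<close>
definition noise_space :: "nat \<Rightarrow> nat \<Rightarrow> real \<Rightarrow> (nat \<times> nat \<Rightarrow> real) measure" where
  "noise_space n d \<sigma> = PiM ({..n} \<times> {..<d}) (\<lambda>_. gauss \<sigma>)"

definition perturb :: "nat \<Rightarrow> (nat \<times> nat \<Rightarrow> real) \<Rightarrow> nat \<Rightarrow> (nat \<Rightarrow> real) \<Rightarrow> (nat \<Rightarrow> real)" where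
  "perturb d \<omega> i x = (\<lambda>j. x j + (if j < d then \<omega> (i, j) else 0))"

end

theory Submission
  imports Defs
begin

text \<open>The squared distance from the perturbed query to the perturbed point p i is
  |a + g|^2 with a = q - p i and g = t_q - t_i, whose coordinates are independent
  N(0, 2 \<sigma>^2). Its moment generating function is explicit,
  E exp (l |a + g|^2) = exp (l |a|^2 / (1 - 4 l \<sigma>^2)) (1 - 4 l \<sigma>^2) powr (- d / 2),
  so Chernoff bounds with l = (2 C + 2) ln n / \<epsilon> show that, except with probability
  n powr (- C - 1) each, the near point stays below the threshold 1 + \<epsilon> + 2 d \<sigma>^2
  and every far point above it; the condition \<sigma>^4 d ln n \<le> c^4 \<epsilon>^4 is what makes
  the second-order terms of the exponent negligible. A union bound over the n points
  concludes.\<close>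

section \<open>Gaussian moment generating functions\<close>

lemma sets_gauss [simp, measurable_cong]: "sets (gauss \<sigma>) = sets borel"
  by (simp add: gauss_def)

lemma space_gauss [simp]: "space (gauss \<sigma>) = UNIV"
  by (simp add: gauss_def)

lemma prob_space_gauss: "\<sigma> \<ge> 0 \<Longrightarrow> prob_space (gauss \<sigma>)"
  by (cases "\<sigma> = 0") (simp_all add: gauss_def prob_space_return prob_space_normal_density)

lemma normal_density_mult_exp_square:
  fixes \<sigma> l c x r :: real
  assumes \<sigma>: "\<sigma> > 0" and r: "r = 1 - 2*l*\<sigma>\<^sup>2" "r > 0"
  shows "normal_density 0 \<sigma> x * exp (l*(x+c)\<^sup>2) =
     exp (l*c\<^sup>2/r) / sqrt r * normal_density (2*l*c*\<sigma>\<^sup>2/r) (\<sigma> / sqrt r) x"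
proof -
  have sqrt_r: "sqrt r > 0"
    using r by simp
  have var: "(\<sigma> / sqrt r)\<^sup>2 = \<sigma>\<^sup>2 / r"
    using r by (simp add: power_divide)
  have sqrt_var: "sqrt (2*pi*(\<sigma>\<^sup>2/r)) = sqrt (2*pi*\<sigma>\<^sup>2) / sqrt r"
    by (simp add: real_sqrt_divide)
  have "-(x - 0)\<^sup>2/(2*\<sigma>\<^sup>2) + l*(x+c)\<^sup>2 = l*c\<^sup>2/r + (-(x - 2*l*c*\<sigma>\<^sup>2/r)\<^sup>2/(2*(\<sigma>\<^sup>2/r)))"
    using \<sigma> r by (simp add: field_simps power2_eq_square) algebra
  then have "exp (-(x - 0)\<^sup>2/(2*\<sigma>\<^sup>2)) * exp (l*(x+c)\<^sup>2)
      = exp (l*c\<^sup>2/r) * exp (-(x - 2*l*c*\<sigma>\<^sup>2/r)\<^sup>2/(2*(\<sigma>\<^sup>2/r)))"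
    by (simp only: exp_add[symmetric])
  moreover have "sqrt (2*pi*\<sigma>\<^sup>2) > 0"
    using \<sigma> by simp
  ultimately show ?thesis
    using sqrt_r unfolding normal_density_def var sqrt_var by (simp add: field_simps)
qed

lemma nn_integral_normal_density:
  "\<sigma> > 0 \<Longrightarrow> (\<integral>\<^sup>+x. ennreal (normal_density \<mu> \<sigma> x) \<partial>lborel) = 1"
  by (subst nn_integral_eq_integral) (auto intro: integrable_normal_density simp: integral_normal_density)

lemma nn_integral_gauss_exp_square:
  fixes \<sigma> l c :: real
  assumes \<sigma>: "\<sigma> \<ge> 0" and l: "2*l*\<sigma>\<^sup>2 < 1"
  shows "(\<integral>\<^sup>+x. ennreal (exp (l*(x+c)\<^sup>2)) \<partial>gauss \<sigma>) =
     ennreal (exp (l*c\<^sup>2/(1-2*l*\<sigma>\<^sup>2)) / sqrt (1-2*l*\<sigma>\<^sup>2))"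
proof (cases "\<sigma> = 0")
  case True
  then show ?thesis by (simp add: gauss_def nn_integral_return)
next
  case False
  with \<sigma> have \<sigma>': "\<sigma> > 0" by simp
  define r where "r = 1 - 2*l*\<sigma>\<^sup>2"
  have r: "r > 0" using l by (simp add: r_def)
  have "(\<integral>\<^sup>+x. ennreal (exp (l*(x+c)\<^sup>2)) \<partial>gauss \<sigma>) =
        (\<integral>\<^sup>+x. ennreal (normal_density 0 \<sigma> x * exp (l*(x+c)\<^sup>2)) \<partial>lborel)"
    using False by (simp add: gauss_def nn_integral_density ennreal_mult)
  also have "\<dots> = (\<integral>\<^sup>+x. ennreal (exp (l*c\<^sup>2/r) / sqrt r) * ennreal (normal_density (2*l*c*\<sigma>\<^sup>2/r) (\<sigma> / sqrt r) x) \<partial>lborel)"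
    using r by (intro nn_integral_cong)
      (simp only: normal_density_mult_exp_square[OF \<sigma>' r_def r] ennreal_mult'[symmetric] divide_nonneg_nonneg exp_ge_zero real_sqrt_ge_zero less_imp_le)
  also have "\<dots> = ennreal (exp (l*c\<^sup>2/r) / sqrt r)"
    using r \<sigma>' by (simp add: nn_integral_cmult nn_integral_normal_density)
  finally show ?thesis by (simp add: r_def)
qed

lemma nn_integral_gauss_diff_exp_square:
  fixes \<sigma> l c :: real
  assumes \<sigma>: "\<sigma> \<ge> 0" and l: "4*l*\<sigma>\<^sup>2 < 1"
  shows "(\<integral>\<^sup>+x. \<integral>\<^sup>+y. ennreal (exp (l*(c + y - x)\<^sup>2)) \<partial>gauss \<sigma> \<partial>gauss \<sigma>) =
     ennreal (exp (l*c\<^sup>2/(1-4*l*\<sigma>\<^sup>2)) / sqrt (1-4*l*\<sigma>\<^sup>2))"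
proof -
  define r where "r = 1 - 2*l*\<sigma>\<^sup>2"
  define r' where "r' = 1 - 2*(l/r)*\<sigma>\<^sup>2"
  have r: "r > 0"
  proof -
    have "2*l*\<sigma>\<^sup>2 \<le> max 0 (4*l*\<sigma>\<^sup>2)"
      by (cases "l \<ge> 0") (auto simp: mult_nonpos_nonneg)
    then show ?thesis
      using l unfolding r_def by linarith
  qed
  have rr': "r * r' = 1 - 4*l*\<sigma>\<^sup>2"
    using r unfolding r'_def r_def by (simp add: field_simps)
  have r': "r' > 0"
    using l rr' r by (metis diff_gt_0_iff_gt zero_less_mult_pos)
  have inner: "(\<integral>\<^sup>+y. ennreal (exp (l*(c + y - x)\<^sup>2)) \<partial>gauss \<sigma>)
      = ennreal (1 / sqrt r) * ennreal (exp ((l/r)*(x + -c)\<^sup>2))" for x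
  proof -
    have "(\<integral>\<^sup>+y. ennreal (exp (l*(c + y - x)\<^sup>2)) \<partial>gauss \<sigma>)
        = (\<integral>\<^sup>+y. ennreal (exp (l*(y + (c - x))\<^sup>2)) \<partial>gauss \<sigma>)"
      by (simp add: algebra_simps)
    also have "\<dots> = ennreal (exp (l*(c - x)\<^sup>2/r) / sqrt r)"
      using r by (simp add: nn_integral_gauss_exp_square[OF \<sigma>] r_def)
    also have "exp (l*(c - x)\<^sup>2/r) / sqrt r = 1 / sqrt r * exp ((l/r)*(x + -c)\<^sup>2)"
      by (simp add: power2_commute)
    finally show ?thesis
      using r by (simp add: ennreal_mult'[symmetric])
  qed
  have outer: "(\<integral>\<^sup>+x. ennreal (exp ((l/r)*(x + -c)\<^sup>2)) \<partial>gauss \<sigma>)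
      = ennreal (exp ((l/r)*(-c)\<^sup>2/r') / sqrt r')"
    unfolding r'_def using r' by (intro nn_integral_gauss_exp_square[OF \<sigma>]) (simp add: r'_def)
  have "(\<integral>\<^sup>+x. \<integral>\<^sup>+y. ennreal (exp (l*(c + y - x)\<^sup>2)) \<partial>gauss \<sigma> \<partial>gauss \<sigma>)
      = ennreal (1 / sqrt r) * (\<integral>\<^sup>+x. ennreal (exp ((l/r)*(x + -c)\<^sup>2)) \<partial>gauss \<sigma>)"
    unfolding inner by (rule nn_integral_cmult) simp
  also have "\<dots> = ennreal (1 / sqrt r) * ennreal (exp ((l/r)*(-c)\<^sup>2/r') / sqrt r')"
    unfolding outer ..
  also have "\<dots> = ennreal (exp (l*c\<^sup>2/(r*r')) / sqrt (r*r'))"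
    using r r' by (simp add: ennreal_mult'[symmetric] real_sqrt_mult)
  finally show ?thesis
    by (simp add: rr')
qed

section \<open>Chernoff bounds on the noise space\<close>

lemma nn_integral_PiM_prod_inj:
  fixes g :: "nat \<Rightarrow> 'k" and N :: "'a measure"
  assumes N: "prob_space N" and K: "finite K" and g: "inj_on g {..<d}" "g ` {..<d} \<subseteq> K"
    and f: "\<And>j. j < d \<Longrightarrow> f j \<in> borel_measurable N"
  shows "(\<integral>\<^sup>+\<omega>. (\<Prod>j<d. f j (\<omega> (g j))) \<partial>PiM K (\<lambda>_. N)) = (\<Prod>j<d. integral\<^sup>N N (f j))"
proof -
  interpret product_prob_space "\<lambda>_::'k. N"
    by (simp add: N product_prob_space_def product_prob_space_axioms_def product_sigma_finite_def
        prob_space_imp_sigma_finite)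
  define h where "h k = (if k \<in> g ` {..<d} then f (the_inv_into {..<d} g k) else (\<lambda>_. 1))" for k
  have h_g: "h (g j) = f j" if "j < d" for j
    using that g(1) by (simp add: h_def the_inv_into_f_f)
  have h_meas: "h k \<in> borel_measurable N" for k
    using f g(1) by (auto simp: h_def the_inv_into_f_f)
  have prod_h: "(\<Prod>k\<in>K. u k (h k)) = (\<Prod>j<d. u (g j) (f j))"
    if "\<And>k. k \<in> K - g ` {..<d} \<Longrightarrow> u k (h k) = 1" for u :: "'k \<Rightarrow> ('a \<Rightarrow> ennreal) \<Rightarrow> ennreal"
  proof -
    have "(\<Prod>k\<in>K. u k (h k)) = (\<Prod>k\<in>g ` {..<d}. u k (h k))"
      using K g(2) that by (intro prod.mono_neutral_right) auto
    also have "\<dots> = (\<Prod>j<d. u (g j) (f j))"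
      using g(1) by (simp add: prod.reindex h_g)
    finally show ?thesis .
  qed
  have "(\<integral>\<^sup>+\<omega>. (\<Prod>j<d. f j (\<omega> (g j))) \<partial>PiM K (\<lambda>_. N)) = (\<integral>\<^sup>+\<omega>. (\<Prod>k\<in>K. h k (\<omega> k)) \<partial>PiM K (\<lambda>_. N))"
    by (intro nn_integral_cong, subst prod_h) (auto simp: h_def)
  also have "\<dots> = (\<Prod>k\<in>K. integral\<^sup>N N (h k))"
    using K h_meas by (intro product_nn_integral_prod) auto
  also have "\<dots> = (\<Prod>j<d. integral\<^sup>N N (f j))"
    by (subst prod_h) (auto simp: h_def M.emeasure_space_1)
  finally show ?thesis .
qed

lemma nn_integral_PiM_prod_pairs:
  fixes N :: "'a measure" and n :: nat and F :: "nat \<Rightarrow> 'a \<Rightarrow> 'a \<Rightarrow> ennreal"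
  assumes N: "prob_space N" and i: "i < n"
    and F: "\<And>j. j < d \<Longrightarrow> case_prod (F j) \<in> borel_measurable (N \<Otimes>\<^sub>M N)"
  shows "(\<integral>\<^sup>+\<omega>. (\<Prod>j<d. F j (\<omega> (i, j)) (\<omega> (n, j))) \<partial>PiM ({..n} \<times> {..<d}) (\<lambda>_. N))
       = (\<Prod>j<d. \<integral>\<^sup>+x. \<integral>\<^sup>+y. F j x y \<partial>N \<partial>N)"
proof -
  interpret product_prob_space "\<lambda>_::nat \<times> nat. N"
    by (simp add: N product_prob_space_def product_prob_space_axioms_def product_sigma_finite_def
        prob_space_imp_sigma_finite)
  define I where "I = {..<n} \<times> {..<d}"
  define J where "J = {n} \<times> {..<d}"
  have IJ: "I \<inter> J = {}" "finite I" "finite J" "I \<union> J = {..n} \<times> {..<d}"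
    unfolding I_def J_def by auto
  have F_meas: "(\<lambda>\<omega>. F j (\<omega> (i, j)) (\<omega> (n, j))) \<in> borel_measurable (PiM K (\<lambda>_. N))"
    if "j < d" "(i, j) \<in> K" "(n, j) \<in> K" for j K
  proof -
    have "(\<lambda>\<omega>. (\<omega> (i, j), \<omega> (n, j))) \<in> PiM K (\<lambda>_. N) \<rightarrow>\<^sub>M N \<Otimes>\<^sub>M N"
      using that by measurable
    from measurable_compose[OF this F[OF that(1)]] show ?thesis
      by simp
  qed
  have F_section: "F j x \<in> borel_measurable N" if "j < d" "x \<in> space N" for j x
    using measurable_Pair2[OF F[OF that(1)] that(2)] by simp
  have "(\<integral>\<^sup>+\<omega>. (\<Prod>j<d. F j (\<omega> (i, j)) (\<omega> (n, j))) \<partial>PiM (I \<union> J) (\<lambda>_. N))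
      = (\<integral>\<^sup>+x. \<integral>\<^sup>+y. (\<Prod>j<d. F j (x (i, j)) (y (n, j))) \<partial>PiM J (\<lambda>_. N) \<partial>PiM I (\<lambda>_. N))"
    using i by (subst product_nn_integral_fold[OF IJ(1-3)])
      (auto simp: I_def J_def merge_def intro!: borel_measurable_prod_ennreal F_meas)
  also have "\<dots> = (\<integral>\<^sup>+x. (\<Prod>j<d. \<integral>\<^sup>+y. F j (x (i, j)) y \<partial>N) \<partial>PiM I (\<lambda>_. N))"
    using N IJ i by (intro nn_integral_cong nn_integral_PiM_prod_inj F_section)
      (auto simp: I_def J_def inj_on_def space_PiM PiE_iff)
  also have "\<dots> = (\<Prod>j<d. \<integral>\<^sup>+x. \<integral>\<^sup>+y. F j x y \<partial>N \<partial>N)"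
    using N IJ F i by (intro nn_integral_PiM_prod_inj) (auto simp: I_def inj_on_def intro!: M.borel_measurable_nn_integral)
  finally show ?thesis
    by (simp add: IJ)
qed

lemma prob_space_noise_space: "\<sigma> \<ge> 0 \<Longrightarrow> prob_space (noise_space n d \<sigma>)"
  unfolding noise_space_def by (intro prob_space_PiM prob_space_gauss)

lemma prod_exp_div_sqrt:
  fixes R :: real
  assumes R: "R > 0"
  shows "(\<Prod>j<d. exp (l*(a j)\<^sup>2/R) / sqrt R) = exp (l * (\<Sum>j<d. (a j)\<^sup>2) / R - real d / 2 * ln R)"
proof -
  have "sqrt R = exp (ln R / 2)"
    using R by (simp add: powr_half_sqrt[symmetric] powr_def)
  then have "(\<Prod>j<d. exp (l*(a j)\<^sup>2/R) / sqrt R) = exp (\<Sum>j<d. l*(a j)\<^sup>2/R - ln R / 2)"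
    by (simp add: exp_sum exp_diff)
  also have "(\<Sum>j<d. l*(a j)\<^sup>2/R - ln R / 2) = l * (\<Sum>j<d. (a j)\<^sup>2) / R - real d / 2 * ln R"
    by (simp add: sum_subtractf sum_divide_distrib sum_distrib_left)
  finally show ?thesis .
qed

lemma nn_integral_noise_space_exp_dist:
  fixes a :: "nat \<Rightarrow> real"
  assumes \<sigma>: "\<sigma> \<ge> 0" and l: "4*l*\<sigma>\<^sup>2 < 1" and i: "i < n"
  shows "(\<integral>\<^sup>+\<omega>. ennreal (exp (l * (\<Sum>j<d. (a j + \<omega> (n,j) - \<omega> (i,j))\<^sup>2))) \<partial>noise_space n d \<sigma>) =
     ennreal (exp (l * (\<Sum>j<d. (a j)\<^sup>2) / (1-4*l*\<sigma>\<^sup>2) - real d / 2 * ln (1-4*l*\<sigma>\<^sup>2)))"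
proof -
  have "(\<integral>\<^sup>+\<omega>. ennreal (exp (l * (\<Sum>j<d. (a j + \<omega> (n,j) - \<omega> (i,j))\<^sup>2))) \<partial>noise_space n d \<sigma>)
      = (\<integral>\<^sup>+\<omega>. (\<Prod>j<d. ennreal (exp (l * (a j + \<omega> (n,j) - \<omega> (i,j))\<^sup>2))) \<partial>noise_space n d \<sigma>)"
    by (simp add: sum_distrib_left exp_sum prod_ennreal)
  also have "\<dots> = (\<Prod>j<d. \<integral>\<^sup>+x. \<integral>\<^sup>+y. ennreal (exp (l * (a j + y - x)\<^sup>2)) \<partial>gauss \<sigma> \<partial>gauss \<sigma>)"
    unfolding noise_space_def using prob_space_gauss[OF \<sigma>] i
    by (intro nn_integral_PiM_prod_pairs) auto
  also have "\<dots> = (\<Prod>j<d. ennreal (exp (l*(a j)\<^sup>2/(1-4*l*\<sigma>\<^sup>2)) / sqrt (1-4*l*\<sigma>\<^sup>2)))"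
    by (simp add: nn_integral_gauss_diff_exp_square[OF \<sigma> l])
  also have "\<dots> = ennreal (\<Prod>j<d. exp (l*(a j)\<^sup>2/(1-4*l*\<sigma>\<^sup>2)) / sqrt (1-4*l*\<sigma>\<^sup>2))"
    using l by (intro prod_ennreal) simp
  finally show ?thesis
    using l by (simp add: prod_exp_div_sqrt)
qed

lemma borel_measurable_noise_dist [measurable]:
  assumes "i \<le> n"
  shows "(\<lambda>\<omega>. \<Sum>j<d. (a j + \<omega> (n,j) - \<omega> (i,j))\<^sup>2) \<in> borel_measurable (noise_space n d \<sigma>)"
  unfolding noise_space_def by measurable (use assms in \<open>auto intro!: measurable_component_singleton\<close>)

lemma (in finite_measure) measure_ge_le_exp_moment:
  assumes [measurable]: "g \<in> borel_measurable M"
    and moment: "(\<integral>\<^sup>+x. ennreal (exp (g x)) \<partial>M) = ennreal B" and B: "B \<ge> 0"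
  shows "measure M {x\<in>space M. t \<le> g x} \<le> B / exp t"
proof -
  define A where "A = {x\<in>space M. t \<le> g x}"
  have [measurable]: "A \<in> sets M"
    unfolding A_def by measurable
  have "ennreal (exp t) * emeasure M A = (\<integral>\<^sup>+x. ennreal (exp t) * indicator A x \<partial>M)"
    by (simp add: nn_integral_cmult_indicator)
  also have "\<dots> \<le> (\<integral>\<^sup>+x. ennreal (exp (g x)) \<partial>M)"
    by (intro nn_integral_mono) (auto simp: A_def indicator_def)
  finally have "ennreal (exp t * measure M A) \<le> ennreal B"
    by (simp add: moment emeasure_eq_measure ennreal_mult)
  then have "exp t * measure M A \<le> B"
    using B by (simp add: ennreal_le_iff)
  then show ?thesis
    unfolding A_def[symmetric] by (simp add: le_divide_eq algebra_simps)
qed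

lemma noise_space_dist_tail:
  fixes a :: "nat \<Rightarrow> real"
  assumes \<sigma>: "\<sigma> \<ge> 0" and l: "4*l*\<sigma>\<^sup>2 < 1" and i: "i < n"
  shows "measure (noise_space n d \<sigma>)
           {\<omega>\<in>space (noise_space n d \<sigma>). l*T \<le> l*(\<Sum>j<d. (a j + \<omega> (n,j) - \<omega> (i,j))\<^sup>2)}
         \<le> exp (l * (\<Sum>j<d. (a j)\<^sup>2) / (1-4*l*\<sigma>\<^sup>2) - real d / 2 * ln (1-4*l*\<sigma>\<^sup>2) - l*T)"
proof -
  interpret prob_space "noise_space n d \<sigma>"
    using \<sigma> by (rule prob_space_noise_space)
  have "measure (noise_space n d \<sigma>)
           {\<omega>\<in>space (noise_space n d \<sigma>). l*T \<le> l*(\<Sum>j<d. (a j + \<omega> (n,j) - \<omega> (i,j))\<^sup>2)}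
         \<le> exp (l * (\<Sum>j<d. (a j)\<^sup>2) / (1-4*l*\<sigma>\<^sup>2) - real d / 2 * ln (1-4*l*\<sigma>\<^sup>2)) / exp (l*T)"
    using i by (intro measure_ge_le_exp_moment nn_integral_noise_space_exp_dist[OF \<sigma> l i]) auto
  then show ?thesis
    by (simp add: exp_diff)
qed

lemma chernoff_exponent_near_le:
  fixes l \<sigma> \<epsilon> B :: real
  assumes l: "l > 0" and \<sigma>: "\<sigma> \<ge> 0" and \<epsilon>: "\<epsilon> > 0" "\<epsilon> < 1"
    and c1: "96*l*\<sigma>\<^sup>2 \<le> \<epsilon>" and c2: "64*d*l*\<sigma>^4 \<le> \<epsilon>" and B: "B \<le> 1" "B \<ge> 0"
  shows "l*B/(1-4*l*\<sigma>\<^sup>2) - real d/2*ln (1-4*l*\<sigma>\<^sup>2) - l*(1+\<epsilon>+2*d*\<sigma>\<^sup>2) \<le> -(l*\<epsilon>/2)"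
proof -
  define y where "y = \<sigma>\<^sup>2"
  have y: "y \<ge> 0" "\<sigma>^4 = y\<^sup>2"
    unfolding y_def by (auto simp: power_mult[symmetric])
  define x where "x = 4*l*y"
  have x: "0 \<le> x" "x \<le> 1/12"
    using c1 \<epsilon> l y unfolding x_def y_def by auto
  have ln: "ln (1-x) \<ge> -x - 2*x\<^sup>2"
    using ln_one_minus_pos_lower_bound[of x] x by simp
  have "x*(2*x) \<le> x*1"
    using x by (intro mult_left_mono) auto
  then have "1/(1-x) \<le> 1 + 2*x"
    using x by (simp add: field_simps)
  then have "(l*B) * (1/(1-x)) \<le> (l*1) * (1+2*x)"
    using B l x by (intro mult_mono mult_left_mono) auto
  then have t1: "l*B/(1-x) \<le> l*(1+2*x)"
    by simp
  have "real d * (-ln (1-x)) \<le> real d * (x+2*x\<^sup>2)"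
    using ln by (intro mult_left_mono) auto
  then have t2: "- real d/2*ln (1-x) \<le> real d/2*(x+2*x\<^sup>2)"
    by simp
  have c1': "8*l*y \<le> \<epsilon>/12"
    using c1 unfolding y_def by simp
  have c2': "16*real d*l*y\<^sup>2 \<le> \<epsilon>/4"
    using c2 y by simp
  have "l*(1+2*x) + real d/2*(x+2*x\<^sup>2) - l*(1+\<epsilon>+2*real d*y) = l*(8*l*y) + l*(16*real d*l*y\<^sup>2) - l*\<epsilon>"
    unfolding x_def by (simp add: algebra_simps power2_eq_square)
  also have "\<dots> \<le> l*(\<epsilon>/12) + l*(\<epsilon>/4) - l*\<epsilon>"
    using c1' c2' l by (intro diff_right_mono add_mono mult_left_mono) auto
  also have "\<dots> \<le> -(l*\<epsilon>/2)"
    using l \<epsilon> by simp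
  finally show ?thesis
    using t1 t2 unfolding x_def y_def by linarith
qed

lemma chernoff_exponent_far_le:
  fixes l \<sigma> \<epsilon> A :: real
  assumes l: "l > 0" and \<sigma>: "\<sigma> \<ge> 0" and \<epsilon>: "\<epsilon> > 0" "\<epsilon> < 1"
    and c1: "96*l*\<sigma>\<^sup>2 \<le> \<epsilon>" and c2: "64*d*l*\<sigma>^4 \<le> \<epsilon>" and A: "A \<ge> 1 + 2*\<epsilon>"
  shows "-l*A/(1+4*l*\<sigma>\<^sup>2) - real d/2*ln (1+4*l*\<sigma>\<^sup>2) + l*(1+\<epsilon>+2*d*\<sigma>\<^sup>2) \<le> -(l*\<epsilon>/2)"
proof -
  define y where "y = \<sigma>\<^sup>2"
  have y: "y \<ge> 0" "\<sigma>^4 = y\<^sup>2"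
    unfolding y_def by (auto simp: power_mult[symmetric])
  define x where "x = 4*l*y"
  have x: "0 \<le> x" "x \<le> 1/12"
    using c1 \<epsilon> l y unfolding x_def y_def by auto
  have ln: "ln (1+x) \<ge> x - x\<^sup>2"
    using ln_one_plus_pos_lower_bound[of x] x by simp
  have "1/(1+x) \<ge> 1 - x"
    using x by (simp add: field_simps)
  then have "l*(1+2*\<epsilon>)*(1-x) \<le> l*A*(1/(1+x))"
    using A l x \<epsilon> by (intro mult_mono mult_left_mono) auto
  then have t1: "-l*A/(1+x) \<le> -l*(1+2*\<epsilon>)*(1-x)"
    by simp
  have t2: "- real d/2*ln (1+x) \<le> - real d/2*(x-x\<^sup>2)"
    using ln by (simp add: mult_left_mono)
  have c1': "12*l*y \<le> \<epsilon>/8"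
    using c1 unfolding y_def by simp
  have c2': "8*real d*l*y\<^sup>2 \<le> \<epsilon>/8"
    using c2 y by simp
  have "\<epsilon>*x \<le> 1*x"
    using \<epsilon> x by (intro mult_right_mono) auto
  then have \<epsilon>x: "l*(2*(\<epsilon>*x)) \<le> l*(2*(1*x))"
    using l by (intro mult_left_mono) auto
  have "-l*(1+2*\<epsilon>)*(1-x) - real d/2*(x-x\<^sup>2) + l*(1+\<epsilon>+2*real d*y)
      = -(l*\<epsilon>) + l*x + l*(2*(\<epsilon>*x)) + l*(8*real d*l*y\<^sup>2)"
    unfolding x_def by (simp add: algebra_simps power2_eq_square)
  also have "\<dots> \<le> l*(12*l*y) + l*(8*real d*l*y\<^sup>2) - l*\<epsilon>"
    using \<epsilon>x unfolding x_def by (simp add: algebra_simps)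
  also have "\<dots> \<le> l*(\<epsilon>/8) + l*(\<epsilon>/8) - l*\<epsilon>"
    using c1' c2' l by (intro diff_right_mono add_mono mult_left_mono) auto
  also have "\<dots> \<le> -(l*\<epsilon>/2)"
    using l \<epsilon> by simp
  finally show ?thesis
    using t1 t2 unfolding x_def y_def by linarith
qed

lemma noise_space_near_tail:
  fixes b :: "nat \<Rightarrow> real"
  assumes \<sigma>: "\<sigma> \<ge> 0" and i: "i < n" and l: "l > 0" and \<epsilon>: "\<epsilon> > 0" "\<epsilon> < 1"
    and c1: "96*l*\<sigma>\<^sup>2 \<le> \<epsilon>" and c2: "64*real d*l*\<sigma>^4 \<le> \<epsilon>" and b: "(\<Sum>j<d. (b j)\<^sup>2) \<le> 1"
  shows "measure (noise_space n d \<sigma>) {\<omega>\<in>space (noise_space n d \<sigma>).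
           1+\<epsilon>+2*real d*\<sigma>\<^sup>2 \<le> (\<Sum>j<d. (b j + \<omega> (n,j) - \<omega> (i,j))\<^sup>2)} \<le> exp (-(l*\<epsilon>/2))"
    (is "measure ?N {\<omega>\<in>space ?N. ?T \<le> ?S \<omega>} \<le> _")
proof -
  have "4*l*\<sigma>\<^sup>2 < 1"
    using c1 \<epsilon> by simp
  moreover have "{\<omega>\<in>space ?N. ?T \<le> ?S \<omega>} = {\<omega>\<in>space ?N. l*?T \<le> l*?S \<omega>}"
    using l by simp
  ultimately have "measure ?N {\<omega>\<in>space ?N. ?T \<le> ?S \<omega>}
      \<le> exp (l * (\<Sum>j<d. (b j)\<^sup>2) / (1-4*l*\<sigma>\<^sup>2) - real d / 2 * ln (1-4*l*\<sigma>\<^sup>2) - l*?T)"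
    using noise_space_dist_tail[OF \<sigma> _ i] by simp
  also have "\<dots> \<le> exp (-(l*\<epsilon>/2))"
    using chernoff_exponent_near_le[OF l \<sigma> \<epsilon> c1 c2 b sum_nonneg] by simp
  finally show ?thesis .
qed

lemma noise_space_far_tail:
  fixes a :: "nat \<Rightarrow> real"
  assumes \<sigma>: "\<sigma> \<ge> 0" and i: "i < n" and l: "l > 0" and \<epsilon>: "\<epsilon> > 0" "\<epsilon> < 1"
    and c1: "96*l*\<sigma>\<^sup>2 \<le> \<epsilon>" and c2: "64*real d*l*\<sigma>^4 \<le> \<epsilon>" and a: "(\<Sum>j<d. (a j)\<^sup>2) \<ge> 1 + 2*\<epsilon>"
  shows "measure (noise_space n d \<sigma>) {\<omega>\<in>space (noise_space n d \<sigma>).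
           (\<Sum>j<d. (a j + \<omega> (n,j) - \<omega> (i,j))\<^sup>2) \<le> 1+\<epsilon>+2*real d*\<sigma>\<^sup>2} \<le> exp (-(l*\<epsilon>/2))"
    (is "measure ?N {\<omega>\<in>space ?N. ?S \<omega> \<le> ?T} \<le> _")
proof -
  have "0 \<le> 4*l*\<sigma>\<^sup>2"
    using l by simp
  then have "4*(-l)*\<sigma>\<^sup>2 < 1"
    by simp
  then have "measure ?N {\<omega>\<in>space ?N. (-l)*?T \<le> (-l)*?S \<omega>}
      \<le> exp ((-l) * (\<Sum>j<d. (a j)\<^sup>2) / (1-4*(-l)*\<sigma>\<^sup>2) - real d / 2 * ln (1-4*(-l)*\<sigma>\<^sup>2) - (-l)*?T)"
    by (rule noise_space_dist_tail[OF \<sigma> _ i])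
  moreover have "{\<omega>\<in>space ?N. (-l)*?T \<le> (-l)*?S \<omega>} = {\<omega>\<in>space ?N. ?S \<omega> \<le> ?T}"
    using l by simp
  ultimately have "measure ?N {\<omega>\<in>space ?N. ?S \<omega> \<le> ?T}
      \<le> exp ((-l) * (\<Sum>j<d. (a j)\<^sup>2) / (1-4*(-l)*\<sigma>\<^sup>2) - real d / 2 * ln (1-4*(-l)*\<sigma>\<^sup>2) - (-l)*?T)"
    by simp
  also have "\<dots> \<le> exp (-(l*\<epsilon>/2))"
    using chernoff_exponent_far_le[OF l \<sigma> \<epsilon> c1 c2 a] by simp
  finally show ?thesis .
qed

lemma (in prob_space) prob_ge_1_minus_union_bound:
  assumes I: "finite I" and B: "\<And>i. i \<in> I \<Longrightarrow> B i \<in> events"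
    and prob_B: "\<And>i. i \<in> I \<Longrightarrow> prob (B i) \<le> p"
    and G: "G \<in> events" "space M - (\<Union>i\<in>I. B i) \<subseteq> G"
  shows "1 - real (card I) * p \<le> prob G"
proof -
  have "prob (\<Union>i\<in>I. B i) \<le> (\<Sum>i\<in>I. prob (B i))"
    using I B by (intro finite_measure_subadditive_finite) auto
  also have "\<dots> \<le> real (card I) * p"
    using sum_mono[of I _ "\<lambda>_. p", OF prob_B] by simp
  finally have "1 - real (card I) * p \<le> prob (space M - (\<Union>i\<in>I. B i))"
    using B I by (subst prob_compl) auto
  also have "\<dots> \<le> prob G"
    using G by (intro finite_measure_mono) auto
  finally show ?thesis .
qed

lemma edist_perturb:
  "edist d (perturb d \<omega> n q) (perturb d \<omega> i x) = sqrt (\<Sum>j<d. ((q j - x j) + \<omega> (n,j) - \<omega> (i,j))\<^sup>2)"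
  unfolding edist_def perturb_def by (intro arg_cong[where f=sqrt] sum.cong refl) (simp add: algebra_simps)

lemma noise_space_nearest_prob:
  fixes p :: "nat \<Rightarrow> nat \<Rightarrow> real"
  assumes \<sigma>: "\<sigma> \<ge> 0" and l: "l > 0" and \<epsilon>: "\<epsilon> > 0" "\<epsilon> < 1"
    and c1: "96*l*\<sigma>\<^sup>2 \<le> \<epsilon>" and c2: "64*real d*l*\<sigma>^4 \<le> \<epsilon>"
    and i0: "i0 < n" and near: "edist d q (p i0) \<le> 1"
    and far: "\<forall>i<n. i \<noteq> i0 \<longrightarrow> edist d q (p i) \<ge> 1 + \<epsilon>"
  shows "measure (noise_space n d \<sigma>)
         {\<omega> \<in> space (noise_space n d \<sigma>).
            \<forall>i<n. i \<noteq> i0 \<longrightarrow>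
              edist d (perturb d \<omega> n q) (perturb d \<omega> i0 (p i0))
                < edist d (perturb d \<omega> n q) (perturb d \<omega> i (p i))}
       \<ge> 1 - real n * exp (-(l*\<epsilon>/2))"
proof -
  let ?N = "noise_space n d \<sigma>"
  interpret prob_space ?N
    using \<sigma> by (rule prob_space_noise_space)
  define a where "a i j = q j - p i j" for i j
  define S where "S i \<omega> = (\<Sum>j<d. (a i j + \<omega> (n,j) - \<omega> (i,j))\<^sup>2)" for i \<omega>
  define T where "T = 1+\<epsilon>+2*real d*\<sigma>\<^sup>2"
  define B where "B i = (if i = i0 then {\<omega>\<in>space ?N. T \<le> S i0 \<omega>} else {\<omega>\<in>space ?N. S i \<omega> \<le> T})" for i
  have edist_S: "edist d (perturb d \<omega> n q) (perturb d \<omega> i (p i)) = sqrt (S i \<omega>)" for \<omega> i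
    unfolding edist_perturb S_def a_def ..
  have [measurable]: "S i \<in> borel_measurable ?N" if "i < n" for i
    using that unfolding S_def by (intro borel_measurable_noise_dist) simp
  have B_events: "B i \<in> events" if "i \<in> {..<n}" for i
    unfolding B_def using that i0 by auto
  define G where "G = {\<omega> \<in> space ?N. \<forall>i\<in>{..<n}. i \<noteq> i0 \<longrightarrow> S i0 \<omega> < S i \<omega>}"
  have "{\<omega> \<in> space ?N. \<forall>i<n. i \<noteq> i0 \<longrightarrow>
          edist d (perturb d \<omega> n q) (perturb d \<omega> i0 (p i0)) < edist d (perturb d \<omega> n q) (perturb d \<omega> i (p i))}
      = G"
    unfolding edist_S G_def by auto
  moreover have "G \<in> events"
    unfolding G_def using i0 by measurable
  moreover have "space ?N - (\<Union>i\<in>{..<n}. B i) \<subseteq> G"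
  proof
    fix \<omega> assume \<omega>: "\<omega> \<in> space ?N - (\<Union>i\<in>{..<n}. B i)"
    then have "S i0 \<omega> < T"
      using i0 by (auto simp: B_def)
    moreover have "T < S i \<omega>" if "i < n" "i \<noteq> i0" for i
    proof -
      have "\<omega> \<notin> B i" "\<omega> \<in> space ?N"
        using \<omega> that by blast+
      then show ?thesis
        using that by (simp add: B_def)
    qed
    ultimately show "\<omega> \<in> G"
      using \<omega> unfolding G_def by (blast intro: order.strict_trans)
  qed
  moreover have "prob (B i) \<le> exp (-(l*\<epsilon>/2))" if "i \<in> {..<n}" for i
  proof (cases "i = i0")
    case True
    have "(\<Sum>j<d. (a i0 j)\<^sup>2) \<le> 1"
      using near unfolding edist_def a_def by simp
    then show ?thesis
      using True noise_space_near_tail[OF \<sigma> i0 l \<epsilon> c1 c2] unfolding B_def S_def T_def by simp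
  next
    case False
    have "(1+\<epsilon>)\<^sup>2 \<le> (\<Sum>j<d. (a i j)\<^sup>2)"
      using far that False \<epsilon> unfolding edist_def a_def by (intro sqrt_ge_absD) simp
    moreover have "1 + 2*\<epsilon> \<le> (1+\<epsilon>)\<^sup>2"
      by (simp add: power2_eq_square algebra_simps)
    ultimately have "1 + 2*\<epsilon> \<le> (\<Sum>j<d. (a i j)\<^sup>2)"
      by linarith
    with that show ?thesis
      using False noise_space_far_tail[OF \<sigma> _ l \<epsilon> c1 c2] unfolding B_def S_def T_def by simp
  qed
  ultimately show ?thesis
    using prob_ge_1_minus_union_bound[OF finite_lessThan B_events] by simp
qed

lemma noise_small_conditions:
  fixes K c0 \<epsilon> L \<sigma> :: real
  assumes K: "K > 0" and c0: "c0 > 0" and \<epsilon>: "\<epsilon> > 0" "\<epsilon> < 1" and L: "L > 0"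
    and d: "c0 * L \<le> real d" and \<sigma>: "\<sigma> \<ge> 0"
    and bound: "\<sigma>^4 * (real d * L) \<le> min (c0/(96*K)\<^sup>2) (1/(64*K)) * \<epsilon>^4"
  shows "96*(K*L/\<epsilon>)*\<sigma>\<^sup>2 \<le> \<epsilon>" and "64*real d*(K*L/\<epsilon>)*\<sigma>^4 \<le> \<epsilon>"
proof -
  define c4 where "c4 = min (c0/(96*K)\<^sup>2) (1/(64*K))"
  have c4: "c4 > 0" "c4 \<le> c0/(96*K)\<^sup>2" "c4 \<le> 1/(64*K)"
    using K c0 by (auto simp: c4_def)
  have \<sigma>4: "\<sigma>^4 \<ge> 0"
    using \<sigma> by simp
  have "L^2*\<sigma>^4*c0 = L*\<sigma>^4*(c0*L)"
    by (simp add: power2_eq_square)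
  also have "\<dots> \<le> \<sigma>^4*(real d*L)"
    using mult_left_mono[OF d, of "L*\<sigma>^4"] L \<sigma>4 by (simp add: algebra_simps)
  also have "\<dots> \<le> c4*\<epsilon>^4"
    using bound by (simp add: c4_def)
  also have "\<dots> \<le> c0/(96*K)\<^sup>2*\<epsilon>^4"
    using c4 by (intro mult_right_mono) auto
  finally have "(96*K)\<^sup>2*(L^2*\<sigma>^4)*c0 \<le> \<epsilon>^4*c0"
    using K by (simp add: field_simps)
  then have "(96*K*L*\<sigma>\<^sup>2)\<^sup>2 \<le> (\<epsilon>\<^sup>2)\<^sup>2"
    using c0 by (simp add: power_mult_distrib power_mult[symmetric] mult.assoc)
  then have "96*K*L*\<sigma>\<^sup>2 \<le> \<epsilon>\<^sup>2"
    by (rule power2_le_imp_le) simp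
  then show "96*(K*L/\<epsilon>)*\<sigma>\<^sup>2 \<le> \<epsilon>"
    using \<epsilon> by (simp add: field_simps power2_eq_square)
  have "64*real d*(K*L/\<epsilon>)*\<sigma>^4 = 64*K*(\<sigma>^4*(real d*L))/\<epsilon>"
    by (simp add: field_simps)
  also have "\<dots> \<le> 64*K*(c4*\<epsilon>^4)/\<epsilon>"
    using bound K \<epsilon> by (intro divide_right_mono mult_left_mono) (auto simp: c4_def)
  also have "\<dots> = (64*K*c4)*\<epsilon>^3"
    using \<epsilon> by (simp add: power_def field_simps)
  also have "\<dots> \<le> 1*\<epsilon>^3"
    using c4 K \<epsilon> by (intro mult_right_mono) (auto simp: field_simps)
  also have "\<dots> \<le> \<epsilon>"
    using \<epsilon> by (simp add: power3_eq_cube mult_le_one)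
  finally show "64*real d*(K*L/\<epsilon>)*\<sigma>^4 \<le> \<epsilon>" .
qed

text \<open>With K = 2 C + 2 and l = K ln n / \<epsilon>, the first term of the minimum gives
  96 l \<sigma>^2 \<le> \<epsilon> and the second 64 d l \<sigma>^4 \<le> \<epsilon>.\<close>
definition noise_constant :: "real \<Rightarrow> real \<Rightarrow> real" where
  "noise_constant C c0 = min (c0/(96*(2*C+2))\<^sup>2) (1/(64*(2*C+2))) powr (1/4)"

lemma noise_constant_pos:
  assumes "C > 0" "c0 > 0"
  shows "noise_constant C c0 > 0"
proof -
  have "min (c0/(96*(2*C+2))\<^sup>2) (1/(64*(2*C+2))) > 0"
    using assms by (simp only: min_less_iff_conj) (auto intro: divide_pos_pos)
  then show ?thesis
    unfolding noise_constant_def by (metis powr_gt_zero order_less_irrefl)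
qed

lemma nearest_neighbor_whp:
  fixes p :: "nat \<Rightarrow> nat \<Rightarrow> real"
  assumes C: "C > 0" and c0: "c0 > 0" and n: "n > 1" and \<epsilon>: "0 < \<epsilon>" "\<epsilon> < 1"
    and d: "d > 0" "c0 * ln (real n) \<le> real d"
    and \<sigma>: "0 \<le> \<sigma>" "\<sigma> \<le> noise_constant C c0 * \<epsilon> / (real d * ln (real n)) powr (1/4)"
    and i0: "i0 < n" and near: "edist d q (p i0) \<le> 1"
    and far: "\<forall>i<n. i \<noteq> i0 \<longrightarrow> edist d q (p i) \<ge> 1 + \<epsilon>"
  shows "measure (noise_space n d \<sigma>)
         {\<omega> \<in> space (noise_space n d \<sigma>).
            \<forall>i<n. i \<noteq> i0 \<longrightarrow>
              edist d (perturb d \<omega> n q) (perturb d \<omega> i0 (p i0))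
                < edist d (perturb d \<omega> n q) (perturb d \<omega> i (p i))}
       \<ge> 1 - real n powr (-C)"
proof -
  define K where "K = 2*C+2"
  define L where "L = ln (real n)"
  define c4 where "c4 = min (c0/(96*K)\<^sup>2) (1/(64*K))"
  have K: "K > 0" and L: "L > 0" and c4: "c4 > 0"
    using C c0 n by (auto simp: K_def L_def c4_def)
  have D: "(real d * L) powr (1/4) > 0"
    using d L by simp
  have "\<sigma> * (real d * L) powr (1/4) \<le> c4 powr (1/4) * \<epsilon>"
    using \<sigma>(2) D by (simp add: noise_constant_def K_def L_def c4_def pos_le_divide_eq)
  then have "(\<sigma> * (real d * L) powr (1/4))^4 \<le> (c4 powr (1/4) * \<epsilon>)^4"
    using \<sigma>(1) by (intro power_mono) auto
  then have "\<sigma>^4 * (real d * L) \<le> c4 * \<epsilon>^4"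
    using d L c4 by (simp add: power_mult_distrib powr_power)
  then have "96*(K*L/\<epsilon>)*\<sigma>\<^sup>2 \<le> \<epsilon>" "64*real d*(K*L/\<epsilon>)*\<sigma>^4 \<le> \<epsilon>"
    using noise_small_conditions[OF K c0 \<epsilon> L _ \<sigma>(1)] d(2) by (simp_all add: L_def c4_def)
  then have "1 - real n * exp (-((K*L/\<epsilon>)*\<epsilon>/2)) \<le> measure (noise_space n d \<sigma>)
         {\<omega> \<in> space (noise_space n d \<sigma>).
            \<forall>i<n. i \<noteq> i0 \<longrightarrow>
              edist d (perturb d \<omega> n q) (perturb d \<omega> i0 (p i0))
                < edist d (perturb d \<omega> n q) (perturb d \<omega> i (p i))}"
    using K L \<epsilon> by (intro noise_space_nearest_prob[OF \<sigma>(1) _ \<epsilon> _ _ i0 near far]) auto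
  moreover have "real n * exp (-((K*L/\<epsilon>)*\<epsilon>/2)) = exp (L + -((C+1)*L))"
  proof -
    have exponent: "(K*L/\<epsilon>)*\<epsilon>/2 = (C+1)*L"
      using \<epsilon> by (simp add: K_def field_simps)
    have "real n = exp L"
      using n by (simp add: L_def)
    then show ?thesis
      unfolding exponent exp_add by simp
  qed
  moreover have "exp (L + -((C+1)*L)) = real n powr (-C)"
    using n by (simp add: L_def powr_def algebra_simps)
  ultimately show ?thesis
    by simp
qed

theorem lemma2p3:
  "\<forall>C::real>0. \<forall>c0::real>0. \<exists>c::real>0.
     \<forall>(n::nat) (d::nat) (k::nat) (U :: (nat \<Rightarrow> real) set) (p :: nat \<Rightarrow> nat \<Rightarrow> real)
       (q :: nat \<Rightarrow> real) (i0::nat) (\<epsilon>::real) (\<sigma>::real).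
       n > 1 \<and> 0 < \<epsilon> \<and> \<epsilon> < 1 \<and> k < d \<and> real d \<ge> c0 * ln (real n) \<and>
       0 \<le> \<sigma> \<and> \<sigma> \<le> c * \<epsilon> / (real d * ln (real n)) powr (1/4) \<and>
       lin_subspace_dim d k U \<and>
       inj_on p {..<n} \<and> (\<forall>i<n. p i \<in> U \<and> enorm d (p i) \<ge> 1) \<and> q \<in> U \<and>
       i0 < n \<and> edist d q (p i0) \<le> 1 \<and>
       (\<forall>i<n. i \<noteq> i0 \<longrightarrow> edist d q (p i) \<ge> 1 + \<epsilon>)
       \<longrightarrow>
       measure (noise_space n d \<sigma>)
         {\<omega> \<in> space (noise_space n d \<sigma>).
            \<forall>i<n. i \<noteq> i0 \<longrightarrow>
              edist d (perturb d \<omega> n q) (perturb d \<omega> i0 (p i0))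
                < edist d (perturb d \<omega> n q) (perturb d \<omega> i (p i))}
       \<ge> 1 - real n powr (-C)"
  (is "\<forall>C>0. \<forall>c0>0. \<exists>c>0. ?P C c0 c")
proof (intro allI impI)
  fix C c0 :: real
  assume "C > 0" "c0 > 0"
  then show "\<exists>c>0. ?P C c0 c"
    using nearest_neighbor_whp by (intro exI[of _ "noise_constant C c0"] conjI noise_constant_pos) auto
qed

end
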